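(* Let $s\ge 1$ and let $i,j$ be integers with $0\le i\le s$, $s\le j\le 2s$ and $(i,j)\ne(s,s)$. Then $$(-1)^{s+i+j}\binom{2s}{j}\sum_{i'=0}^{s}(-1)^{i'}\binom{j-i'-1}{s}\binom{s}{i-i'}+(-1)^{i+j+1}(2s-i)\binom{2s}{i}\sum_{j'=0}^{s}\sum_{t=0}^{i}\frac{(-1)^{t+j'}}{2s-t}\binom{i}{t}\binom{s-t-1+j'}{j'}\binom{s}{j-j'}=0.$$
   Context: For an integer $b\ge 0$ and any integer $a$, $\binom{a}{b}=a(a-1)\cdots(a-b+1)/b!$, and $\binom{a}{b}=0$ for $b<0$. *)

theory Defs
  imports Complex_Main
begin

definition binom :: "int \<Rightarrow> int \<Rightarrow> real" where
  "binom a b = (if b < 0 then 0 else (real_of_int a) gchoose (nat b))"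

end

theory Submission
  imports Defs "HOL-Computational_Algebra.Formal_Power_Series"
begin

text \<open>
  Both sums reduce to the same alternating sum
  \<open>X = \<Sum>m\<le>i. (-1)^(i+m) C(j,m) C(j-1-m, s-m)\<close>.
  In the first, \<open>C(s, i-i')\<close> is expanded as an alternating partial row sum of
  \<open>C(s+1, \<cdot>)\<close>;
  regrouping along diagonals leaves Gosper-summable inner sums that evaluate to
  \<open>C(j,m) C(j-1-m, s-m)\<close>.
  In the second, \<open>(-1)^j' C(s-t-1+j', j') = C(t-s, j')\<close> is split by Vandermonde into
  \<open>\<Sum>m. C(t,m) C(-s, j'-m)\<close>. The sum over \<open>t\<close> is then a discrete Beta integral,
  equal to \<open>(-1)^i C(2s,m) / ((2s-i) C(2s,i))\<close>, and the sum over \<open>j'\<close> is a truncated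
  Vandermonde sum with a closed form. This turns the second term into \<open>(-1)^s C(2s,j) X\<close>,
  and the signs make the two terms cancel.
\<close>

lemma minus_one_power_diff:
  fixes m n :: nat
  assumes "m \<le> n"
  shows "(-1::'a::comm_ring_1) ^ (n - m) = (-1) ^ n * (-1) ^ m"
proof -
  obtain d where n: "n = m + d"
    using assms le_Suc_ex by blast
  have "(-1::'a) ^ n * (-1) ^ m = (-1) ^ d * ((-1) ^ m * (-1) ^ m)"
    by (simp add: n power_add algebra_simps)
  then show ?thesis
    by (simp add: n minus_one_mult_self)
qed

lemma sum_mult_binomial_Suc:
  fixes f :: "nat \<Rightarrow> 'a::comm_semiring_1"
  shows "(\<Sum>u\<le>Suc r. f u * of_nat (Suc r choose u))
       = (\<Sum>u\<le>r. f u * of_nat (r choose u)) + (\<Sum>u\<le>r. f (Suc u) * of_nat (r choose u))"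
proof -
  have "(\<Sum>u\<le>Suc r. f u * of_nat (Suc r choose u))
      = (f 0 + (\<Sum>u\<le>r. f (Suc u) * of_nat (r choose Suc u)))
        + (\<Sum>u\<le>r. f (Suc u) * of_nat (r choose u))"
    by (simp add: sum.atMost_Suc_shift sum.distrib distrib_left add_ac del: sum.atMost_Suc)
  also have "f 0 + (\<Sum>u\<le>r. f (Suc u) * of_nat (r choose Suc u))
      = (\<Sum>u\<le>Suc r. f u * of_nat (r choose u))"
    by (simp add: sum.atMost_Suc_shift del: sum.atMost_Suc)
  also have "\<dots> = (\<Sum>u\<le>r. f u * of_nat (r choose u))"
    by (simp add: binomial_eq_0)
  finally show ?thesis .
qed

lemma sum_atMost_triangle_reindex:
  fixes n :: nat
  shows "(\<Sum>k\<le>n. \<Sum>u\<le>n - k. g k u) = (\<Sum>m\<le>n. \<Sum>k\<le>m. g k (m - k))"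
proof -
  have "{(k, u). k + u \<le> n} = Sigma {..n} (\<lambda>k. {..n - k})"
    by auto
  then have "(\<Sum>k\<le>n. \<Sum>u\<le>n - k. g k u) = (\<Sum>(k, u)\<in>{(k, u). k + u \<le> n}. g k u)"
    by (simp add: sum.Sigma)
  also have "\<dots> = (\<Sum>m\<le>n. \<Sum>k\<le>m. g k (m - k))"
    by (rule sum.triangle_reindex_eq)
  finally show ?thesis .
qed

lemma choose_mult':
  "k \<le> m \<Longrightarrow> (n choose m) * (m choose k) = (n choose k) * ((n - k) choose (m - k))"
  by (cases "m \<le> n") (auto simp: choose_mult binomial_eq_0)

lemma alternating_sum_Suc_choose_mult_choose:
  fixes S c i :: nat
  assumes "i \<le> S"
  shows "(\<Sum>k\<le>i. (-1) ^ k * real (Suc S choose k) * real ((c + k) choose S))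
       = (-1) ^ i * real ((c + Suc i) choose i) * real (c choose (S - i))"
  using assms
proof (induction i)
  case 0
  then show ?case by simp
next
  case (Suc i)
  have "S - i = Suc (S - Suc i)"
    using Suc.prems by simp
  then have pascal: "Suc c choose (S - i) = (c choose (S - Suc i)) + (c choose (S - i))"
    by simp
  have "(Suc S choose Suc i) * ((c + Suc i) choose S)
      = ((c + Suc i) choose S) * (S choose Suc i) + ((c + Suc i) choose S) * (S choose i)"
    by (simp add: algebra_simps)
  also have "\<dots> = ((c + Suc i) choose Suc i) * (c choose (S - Suc i))
                 + ((c + Suc i) choose i) * (Suc c choose (S - i))"
    using choose_mult'[of "Suc i" S "c + Suc i"] choose_mult'[of i S "c + Suc i"] Suc.prems
    by simp
  also have "\<dots> = ((c + Suc (Suc i)) choose Suc i) * (c choose (S - Suc i))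
                 + ((c + Suc i) choose i) * (c choose (S - i))"
    by (simp add: pascal algebra_simps)
  finally have step: "real (Suc S choose Suc i) * real ((c + Suc i) choose S)
      = real ((c + Suc (Suc i)) choose Suc i) * real (c choose (S - Suc i))
        + real ((c + Suc i) choose i) * real (c choose (S - i))"
    by (metis of_nat_add of_nat_mult)
  show ?case
    using Suc step by (simp add: algebra_simps del: binomial_Suc_Suc)
qed

lemma partial_Vandermonde_minus:
  fixes S p q :: nat
  assumes "1 \<le> S" and "p \<le> q"
  shows "(\<Sum>v\<le>p. (- real S gchoose v) * real (S choose (q - v)))
       = (-1) ^ p * real ((S + p) choose q) * real ((q - 1) choose p)"
  using assms(2)
proof (induction p)
  case 0
  then show ?case by simp
next
  case (Suc p)
  obtain q' where q: "q = Suc q'" using Suc.prems by (cases q) auto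
  have step: "((S + p) choose Suc p) * (S choose (q - Suc p))
      = ((S + Suc p) choose q) * (q' choose Suc p) + ((S + p) choose q) * (q' choose p)"
  proof (cases "q' = p")
    case True
    then show ?thesis by (simp add: q)
  next
    case False
    then have "Suc p \<le> q'" using Suc.prems q by simp
    then have "q - Suc p = Suc (q' - Suc p)" and "S = Suc (S - 1)"
      using assms(1) by (simp_all add: q)
    then have pascal: "S choose (q - Suc p) = ((S - 1) choose (q' - Suc p)) + ((S - 1) choose (q - Suc p))"
      by (metis binomial_Suc_Suc)
    have "((S + Suc p) choose q) * (q' choose Suc p) + ((S + p) choose q) * (q' choose p)
        = ((S + p) choose q) * (q choose Suc p) + ((S + p) choose q') * (q' choose Suc p)"
      by (simp add: q algebra_simps)
    also have "\<dots> = ((S + p) choose Suc p) * ((S - 1) choose (q - Suc p))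
                  + ((S + p) choose Suc p) * ((S - 1) choose (q' - Suc p))"
      using choose_mult'[of "Suc p" q "S + p"] choose_mult'[of "Suc p" q' "S + p"] \<open>Suc p \<le> q'\<close> q
      by simp
    finally show ?thesis by (simp add: pascal algebra_simps)
  qed
  have neg: "- real S gchoose Suc p = (-1) ^ Suc p * real ((S + p) choose Suc p)"
    using assms(1) by (simp add: gbinomial_minus binomial_gbinomial of_nat_diff)
  have "real ((S + p) choose Suc p) * real (S choose (q - Suc p))
      = real ((S + Suc p) choose q) * real ((q - 1) choose Suc p) + real ((S + p) choose q) * real ((q - 1) choose p)"
    using step by (simp add: q flip: of_nat_mult of_nat_add)
  then show ?case
    using Suc by (simp add: neg algebra_simps)
qed

lemma alternating_sum_choose_div:
  fixes r N :: nat
  assumes "r < N"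
  shows "(\<Sum>u\<le>r. (-1) ^ u * real (r choose u) / real (N - u))
       = (-1) ^ r / (real (N - r) * real (N choose r))"
  using assms
proof (induction r arbitrary: N)
  case 0
  then show ?case by simp
next
  case (Suc r)
  define M where "M = N - 1"
  have N: "N = Suc M" and rM: "r < M"
    using Suc.prems by (simp_all add: M_def)
  have "(\<Sum>u\<le>Suc r. (-1) ^ u * real (Suc r choose u) / real (N - u))
      = (\<Sum>u\<le>r. (-1) ^ u * real (r choose u) / real (N - u))
        - (\<Sum>u\<le>r. (-1) ^ u * real (r choose u) / real (M - u))"
    using sum_mult_binomial_Suc[of "\<lambda>u. (-1) ^ u / real (N - u)" r]
    by (simp add: N sum_negf field_simps)
  also have "\<dots> = (-1) ^ r / (real (N - r) * real (N choose r))
                 - (-1) ^ r / (real (M - r) * real (M choose r))"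
    using Suc.IH[of N] Suc.IH[of M] Suc.prems rM by simp
  also have "\<dots> = (-1) ^ Suc r / (real (N - Suc r) * real (N choose Suc r))"
  proof -
    have absorb: "real (N - r) * real (N choose r) = real N * real (M choose r)"
      using binomial_absorb_comp[of N r] by (simp add: M_def flip: of_nat_mult)
    have "real (Suc r) * real (N choose Suc r) = real N * real (M choose r)"
      using Suc_times_binomial[of r M] unfolding N by (metis of_nat_mult)
    then have Suc_times: "real (N choose Suc r) = real N * real (M choose r) / (real r + 1)"
      by (simp add: field_simps)
    define d where "d = real (M - r)"
    define C where "C = real (M choose r)"
    have nz: "real N \<noteq> 0" "C \<noteq> 0" "d \<noteq> 0" "real r + 1 \<noteq> 0"
      using rM by (simp_all add: N d_def C_def)
    have "(-1) ^ r / (real N * C) - (-1) ^ r / (d * C) = (-1) ^ r * (d - real N) / (real N * d * C)"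
      using nz by (simp add: field_simps)
    also have "d - real N = - (real r + 1)"
      using rM by (simp add: N d_def of_nat_diff)
    also have "(-1) ^ r * - (real r + 1) / (real N * d * C) = (-1) ^ Suc r / (d * (real N * C / (real r + 1)))"
      using nz by (simp add: field_simps)
    finally show ?thesis
      unfolding absorb Suc_times by (simp add: N d_def C_def)
  qed
  finally show ?case .
qed

lemma alternating_sum_choose_mult_choose_div:
  fixes m r N :: nat
  assumes "m \<le> r" and "r < N"
  shows "real (N - r) * real (N choose r)
           * (\<Sum>t\<le>r. (-1) ^ t * real (r choose t) * real (t choose m) / real (N - t))
       = (-1) ^ r * real (N choose m)"
proof -
  have "(\<Sum>t\<le>r. (-1) ^ t * real (r choose t) * real (t choose m) / real (N - t))
      = (\<Sum>t=m..r. (-1) ^ t * real (r choose t) * real (t choose m) / real (N - t))"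
    by (rule sum.mono_neutral_right) (auto simp: binomial_eq_0)
  also have "\<dots> = (\<Sum>u\<le>r - m. (-1) ^ (u + m) * real (r choose (u + m)) * real ((u + m) choose m)
                                 / real (N - (u + m)))"
    using sum.shift_bounds_cl_nat_ivl[of _ 0 m "r - m"] assms(1) by (simp add: atLeast0AtMost)
  also have "\<dots> = (-1) ^ m * real (r choose m)
                   * (\<Sum>u\<le>r - m. (-1) ^ u * real ((r - m) choose u) / real ((N - m) - u))"
  proof -
    have "(-1) ^ (u + m) * real (r choose (u + m)) * real ((u + m) choose m) / real (N - (u + m))
        = (-1) ^ m * real (r choose m) * ((-1) ^ u * real ((r - m) choose u) / real ((N - m) - u))"
      if "u \<le> r - m" for u
    proof -
      have "(r choose (u + m)) * ((u + m) choose m) = (r choose m) * ((r - m) choose u)"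
        using choose_mult[of m "u + m" r] that assms(1) by simp
      then have "real (r choose (u + m)) * real ((u + m) choose m) = real (r choose m) * real ((r - m) choose u)"
        by (metis of_nat_mult)
      then show ?thesis
        by (simp add: power_add algebra_simps)
    qed
    then show ?thesis
      by (simp add: sum_distrib_left)
  qed
  also have "\<dots> = (-1) ^ m * real (r choose m) * ((-1) ^ (r - m) / (real (N - r) * real ((N - m) choose (r - m))))"
    using alternating_sum_choose_div[of "r - m" "N - m"] assms by simp
  finally have sum_eq: "(\<Sum>t\<le>r. (-1) ^ t * real (r choose t) * real (t choose m) / real (N - t))
      = (-1) ^ m * real (r choose m) * ((-1) ^ (r - m) / (real (N - r) * real ((N - m) choose (r - m))))" .
  define d where "d = real (N - r)"
  have "real (N choose r) * real (r choose m) = real (N choose m) * real ((N - m) choose (r - m))"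
    using choose_mult[of m r N] assms by (metis less_imp_le of_nat_mult)
  moreover have "(-1) ^ m * (-1) ^ (r - m) = ((-1) ^ r :: real)"
    using assms(1) by (simp flip: power_add)
  moreover have "d \<noteq> 0" "real ((N - m) choose (r - m)) \<noteq> 0"
    using assms by (simp_all add: d_def)
  ultimately show ?thesis
    unfolding sum_eq d_def[symmetric] by (simp add: field_simps)
qed

definition common_sum :: "nat \<Rightarrow> nat \<Rightarrow> nat \<Rightarrow> real" where
  "common_sum S I J = (\<Sum>m\<le>I. (-1) ^ (I + m) * real (J choose m) * real ((J - 1 - m) choose (S - m)))"

lemma first_sum_eq_common_sum:
  fixes S I J :: nat
  assumes "I \<le> S" and "I < J"
  shows "(\<Sum>k\<le>I. (-1) ^ k * real ((J - 1 - k) choose S) * real (S choose (I - k))) = common_sum S I J"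
proof -
  have row: "real (S choose v) = (-1) ^ v * (\<Sum>u\<le>v. (-1) ^ u * real (Suc S choose u))" for v
    using gbinomial_sum_lower_neg[of "real (Suc S)" v] by (simp add: binomial_gbinomial mult_ac)
  have inner: "(\<Sum>k\<le>m. (-1) ^ (m - k) * real (Suc S choose (m - k)) * real ((J - 1 - k) choose S))
      = (-1) ^ m * real (J choose m) * real ((J - 1 - m) choose (S - m))" if "m \<le> I" for m
  proof -
    have "(\<Sum>k\<le>m. (-1) ^ (m - k) * real (Suc S choose (m - k)) * real ((J - 1 - k) choose S))
        = (\<Sum>k\<le>m. (-1) ^ k * real (Suc S choose k) * real ((J - 1 - m + k) choose S))"
      using sum.atLeastAtMost_rev[of
          "\<lambda>k. (-1) ^ (m - k) * real (Suc S choose (m - k)) * real ((J - 1 - k) choose S)" 0 m]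
        that assms
      by (auto simp: atLeast0AtMost intro!: sum.cong)
    also have "\<dots> = (-1) ^ m * real ((J - 1 - m + Suc m) choose m) * real ((J - 1 - m) choose (S - m))"
      using alternating_sum_Suc_choose_mult_choose[of m S "J - 1 - m"] that assms by (simp add: add.commute)
    finally show ?thesis
      using that assms by simp
  qed
  have "(\<Sum>k\<le>I. (-1) ^ k * real ((J - 1 - k) choose S) * real (S choose (I - k)))
      = (-1) ^ I * (\<Sum>k\<le>I. \<Sum>u\<le>I - k. (-1) ^ u * real (Suc S choose u) * real ((J - 1 - k) choose S))"
    by (simp add: row sum_distrib_left sum_distrib_right minus_one_power_diff mult_ac)
  also have "\<dots> = (-1) ^ I * (\<Sum>m\<le>I. \<Sum>k\<le>m.
                        (-1) ^ (m - k) * real (Suc S choose (m - k)) * real ((J - 1 - k) choose S))"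
    by (simp only: sum_atMost_triangle_reindex)
  also have "\<dots> = (-1) ^ I * (\<Sum>m\<le>I. (-1) ^ m * real (J choose m) * real ((J - 1 - m) choose (S - m)))"
    using inner by simp
  finally show ?thesis
    by (simp add: common_sum_def sum_distrib_left power_add mult_ac)
qed

lemma second_sum_reduction:
  fixes S I J :: nat
  assumes "1 \<le> S" and "I \<le> S" and "S \<le> J"
  shows "(\<Sum>j'\<le>S. \<Sum>t\<le>I. (-1) ^ t / real (2 * S - t) * real (I choose t)
              * ((real t - real S) gchoose j') * real (S choose (J - j')))
       = (\<Sum>m\<le>I. (\<Sum>t\<le>I. (-1) ^ t * real (I choose t) * real (t choose m) / real (2 * S - t))
              * ((-1) ^ (S - m) * real ((2 * S - m) choose (J - m)) * real ((J - 1 - m) choose (S - m))))"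
proof -
  define \<beta> where "\<beta> m = (\<Sum>t\<le>I. (-1) ^ t * real (I choose t) * real (t choose m) / real (2 * S - t))" for m
  have Vandermonde: "(real t - real S) gchoose j' = (\<Sum>m\<le>j'. real (t choose m) * (- real S gchoose (j' - m)))"
    for t j'
    using gbinomial_Vandermonde[of "real t" "- real S" j'] by (simp add: atLeast0AtMost binomial_gbinomial)
  have "(\<Sum>j'\<le>S. \<Sum>t\<le>I. (-1) ^ t / real (2 * S - t) * real (I choose t)
                * ((real t - real S) gchoose j') * real (S choose (J - j')))
      = (\<Sum>j'\<le>S. \<Sum>m\<le>j'. (- real S gchoose (j' - m)) * real (S choose (J - j')) * \<beta> m)"
    unfolding Vandermonde \<beta>_def
    by (simp add: sum_distrib_left sum_distrib_right sum_divide_distrib sum.swap[of _ "{..I}"] mult_ac)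
  also have "\<dots> = (\<Sum>m\<le>S. \<Sum>v\<le>S - m. (- real S gchoose v) * real (S choose (J - m - v)) * \<beta> m)"
    by (simp add: sum_atMost_triangle_reindex)
  also have "\<dots> = (\<Sum>m\<le>S. \<beta> m * ((-1) ^ (S - m) * real ((2 * S - m) choose (J - m))
                                  * real ((J - 1 - m) choose (S - m))))"
  proof (intro sum.cong refl)
    fix m assume "m \<in> {..S}"
    then have "S + (S - m) = 2 * S - m" and "J - m - 1 = J - 1 - m"
      by auto
    then have "(\<Sum>v\<le>S - m. (- real S gchoose v) * real (S choose (J - m - v)))
        = (-1) ^ (S - m) * real ((2 * S - m) choose (J - m)) * real ((J - 1 - m) choose (S - m))"
      using partial_Vandermonde_minus[of S "S - m" "J - m"] assms by simp
    then show "(\<Sum>v\<le>S - m. (- real S gchoose v) * real (S choose (J - m - v)) * \<beta> m)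
        = \<beta> m * ((-1) ^ (S - m) * real ((2 * S - m) choose (J - m)) * real ((J - 1 - m) choose (S - m)))"
      by (simp only: mult.commute[of _ "\<beta> m"] flip: sum_distrib_left)
  qed
  also have "\<dots> = (\<Sum>m\<le>I. \<beta> m * ((-1) ^ (S - m) * real ((2 * S - m) choose (J - m))
                                  * real ((J - 1 - m) choose (S - m))))"
    using assms(2) by (intro sum.mono_neutral_right) (auto simp: \<beta>_def binomial_eq_0)
  finally show ?thesis
    unfolding \<beta>_def .
qed

lemma second_sum_eq_common_sum:
  fixes S I J :: nat
  assumes "1 \<le> S" and "I \<le> S" and "S \<le> J"
  shows "real (2 * S - I) * real (2 * S choose I)
           * (\<Sum>j'\<le>S. \<Sum>t\<le>I. (-1) ^ t / real (2 * S - t) * real (I choose t)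
                * ((real t - real S) gchoose j') * real (S choose (J - j')))
       = (-1) ^ S * real (2 * S choose J) * common_sum S I J"
proof -
  define \<beta> where "\<beta> m = (\<Sum>t\<le>I. (-1) ^ t * real (I choose t) * real (t choose m) / real (2 * S - t))" for m
  have "real (2 * S - I) * real (2 * S choose I)
          * (\<beta> m * ((-1) ^ (S - m) * real ((2 * S - m) choose (J - m)) * real ((J - 1 - m) choose (S - m))))
      = (-1) ^ S * real (2 * S choose J)
          * ((-1) ^ (I + m) * real (J choose m) * real ((J - 1 - m) choose (S - m)))" if "m \<le> I" for m
  proof -
    have weight: "real (2 * S - I) * real (2 * S choose I) * \<beta> m = (-1) ^ I * real (2 * S choose m)"
      unfolding \<beta>_def using alternating_sum_choose_mult_choose_div[of m I "2 * S"] that assms by simp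
    have sign: "(-1) ^ (S - m) = (-1) ^ S * ((-1) ^ m :: real)"
      using that assms by (simp add: minus_one_power_diff)
    have revision: "real (2 * S choose m) * real ((2 * S - m) choose (J - m))
        = real (2 * S choose J) * real (J choose m)"
      using choose_mult'[of m J "2 * S"] that assms by (metis le_trans of_nat_mult)
    have "real (2 * S - I) * real (2 * S choose I)
          * (\<beta> m * ((-1) ^ (S - m) * real ((2 * S - m) choose (J - m)) * real ((J - 1 - m) choose (S - m))))
        = (real (2 * S - I) * real (2 * S choose I) * \<beta> m) * (-1) ^ (S - m)
          * real ((2 * S - m) choose (J - m)) * real ((J - 1 - m) choose (S - m))"
      by (simp only: mult.assoc)
    also have "\<dots> = (-1) ^ S * (-1) ^ (I + m) * (real (2 * S choose m) * real ((2 * S - m) choose (J - m)))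
          * real ((J - 1 - m) choose (S - m))"
      unfolding weight sign power_add by (simp only: mult_ac)
    finally show ?thesis
      unfolding revision by (simp only: mult_ac)
  qed
  then show ?thesis
    unfolding second_sum_reduction[OF assms] \<beta>_def[symmetric] common_sum_def sum_distrib_left
    by (intro sum.cong) auto
qed

lemma binom_of_nat: "binom (int n) (int k) = real (n choose k)"
  unfolding binom_def by (simp add: binomial_gbinomial)

lemma sum_atLeastAtMost_int_of_nat:
  "(\<Sum>x = 0..int n. f x) = (\<Sum>k\<le>n. f (int k))"
proof -
  have "{0..int n} = int ` {..n}"
    by (metis atLeast0AtMost image_int_atLeastAtMost of_nat_0)
  then show ?thesis
    by (simp add: sum.reindex)
qed

lemma first_sum_of_nat:
  fixes S I J :: nat
  assumes "I \<le> S" and "I < J"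
  shows "(\<Sum>i' = 0..int S. (-1) ^ nat i' * binom (int J - i' - 1) (int S) * binom (int S) (int I - i'))
       = (\<Sum>k\<le>I. (-1) ^ k * real ((J - 1 - k) choose S) * real (S choose (I - k)))"
proof -
  have "(\<Sum>i' = 0..int S. (-1) ^ nat i' * binom (int J - i' - 1) (int S) * binom (int S) (int I - i'))
      = (\<Sum>k\<le>S. (-1) ^ k * binom (int J - int k - 1) (int S) * binom (int S) (int I - int k))"
    by (simp add: sum_atLeastAtMost_int_of_nat)
  also have "\<dots> = (\<Sum>k\<le>I. (-1) ^ k * binom (int J - int k - 1) (int S) * binom (int S) (int I - int k))"
    using assms(1) by (intro sum.mono_neutral_right) (auto simp: binom_def)
  also have "\<dots> = (\<Sum>k\<le>I. (-1) ^ k * real ((J - 1 - k) choose S) * real (S choose (I - k)))"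
  proof (intro sum.cong refl)
    fix k assume "k \<in> {..I}"
    then have upper: "int J - int k - 1 = int (J - 1 - k)" and lower: "int I - int k = int (I - k)"
      using assms by auto
    show "(-1) ^ k * binom (int J - int k - 1) (int S) * binom (int S) (int I - int k)
        = (-1) ^ k * real ((J - 1 - k) choose S) * real (S choose (I - k))"
      unfolding upper lower binom_of_nat ..
  qed
  finally show ?thesis .
qed

lemma second_sum_of_nat:
  fixes S I J :: nat
  assumes "I \<le> S" and "S \<le> J"
  shows "(\<Sum>j' = 0..int S. \<Sum>t = 0..int I. (-1) ^ nat (t + j') / real_of_int (2 * int S - t)
              * binom (int I) t * binom (int S - t - 1 + j') j' * binom (int S) (int J - j'))
       = (\<Sum>j'\<le>S. \<Sum>t\<le>I. (-1) ^ t / real (2 * S - t) * real (I choose t)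
              * ((real t - real S) gchoose j') * real (S choose (J - j')))"
  unfolding sum_atLeastAtMost_int_of_nat
proof (intro sum.cong refl)
  fix j' t assume "j' \<in> {..S}" and "t \<in> {..I}"
  then have denominator: "real_of_int (2 * int S - int t) = real (2 * S - t)"
    and index: "int J - int j' = int (J - j')"
    using assms by auto
  have negated: "binom (int S - int t - 1 + int j') (int j') = (-1) ^ j' * ((real t - real S) gchoose j')"
  proof -
    have "binom (int S - int t - 1 + int j') (int j') = (real S - real t - 1 + real j') gchoose j'"
      by (simp add: binom_def)
    also have "\<dots> = (-1) ^ j' * ((real j' - (real S - real t - 1 + real j') - 1) gchoose j')"
      by (rule gbinomial_negated_upper)
    also have "real j' - (real S - real t - 1 + real j') - 1 = real t - real S"
      by simp
    finally show ?thesis .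
  qed
  have sign: "(-1) ^ nat (int t + int j') = (-1) ^ t * ((-1) ^ j' :: real)"
    by (simp add: nat_add_distrib power_add)
  show "(-1) ^ nat (int t + int j') / real_of_int (2 * int S - int t)
        * binom (int I) (int t) * binom (int S - int t - 1 + int j') (int j') * binom (int S) (int J - int j')
      = (-1) ^ t / real (2 * S - t) * real (I choose t) * ((real t - real S) gchoose j') * real (S choose (J - j'))"
    unfolding denominator index negated sign binom_of_nat by (simp add: mult_ac)
qed


theorem proposition8:
  fixes s i j :: int
  assumes "s \<ge> 1" and "0 \<le> i" and "i \<le> s" and "s \<le> j" and "j \<le> 2 * s"
    and "(i, j) \<noteq> (s, s)"
  shows "(-1) ^ nat (s + i + j) * binom (2 * s) j *
           (\<Sum>i' = 0..s. (-1) ^ nat i' * binom (j - i' - 1) s * binom s (i - i'))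
         + (-1) ^ nat (i + j + 1) * real_of_int (2 * s - i) * binom (2 * s) i *
           (\<Sum>j' = 0..s. \<Sum>t = 0..i. (-1) ^ nat (t + j') / real_of_int (2 * s - t)
              * binom i t * binom (s - t - 1 + j') j' * binom s (j - j'))
         = 0"
proof -
  obtain S I J :: nat where s: "s = int S" and i: "i = int I" and j: "j = int J"
    using assms by (metis nonneg_int_cases order_trans zero_le_one)
  have "1 \<le> S" "I \<le> S" "S \<le> J" "I < J"
    using assms unfolding s i j by auto
  have two_s: "2 * s = int (2 * S)"
    unfolding s by simp
  have prefactors: "binom (2 * s) j = real (2 * S choose J)" "binom (2 * s) i = real (2 * S choose I)"
    unfolding two_s i j by (simp_all only: binom_of_nat)
  have difference: "real_of_int (2 * s - i) = real (2 * S - I)"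
    using \<open>I \<le> S\<close> unfolding s i by simp
  have signs: "nat (s + i + j) = S + I + J" "nat (i + j + 1) = I + J + 1"
    unfolding s i j by simp_all
  have first: "(\<Sum>i' = 0..s. (-1) ^ nat i' * binom (j - i' - 1) s * binom s (i - i')) = common_sum S I J"
    unfolding s i j first_sum_of_nat[OF \<open>I \<le> S\<close> \<open>I < J\<close>]
    by (rule first_sum_eq_common_sum[OF \<open>I \<le> S\<close> \<open>I < J\<close>])
  have second: "real_of_int (2 * s - i) * binom (2 * s) i
      * (\<Sum>j' = 0..s. \<Sum>t = 0..i. (-1) ^ nat (t + j') / real_of_int (2 * s - t)
           * binom i t * binom (s - t - 1 + j') j' * binom s (j - j'))
      = (-1) ^ S * real (2 * S choose J) * common_sum S I J"
    unfolding prefactors difference unfolding s i j second_sum_of_nat[OF \<open>I \<le> S\<close> \<open>S \<le> J\<close>]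
    by (rule second_sum_eq_common_sum[OF \<open>1 \<le> S\<close> \<open>I \<le> S\<close> \<open>S \<le> J\<close>])
  from first second show ?thesis
    by (simp only: mult.assoc prefactors(1) signs) (simp add: power_add)
qed

end
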